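(* Let $\gamma_1=\gamma_2=\frac\pi4$ and for real $x_1,x_2$ with $x_1^2+x_2^2+\frac19\le1$ let $\rho(x_1,x_2)=\frac12\big(\Sigma_0+x_1\Sigma_1+x_2\Sigma_2-\frac13\Sigma_3\big)$. Then $g(\rho(x_1,x_2))>g(\rho(0,0))=\frac49$ whenever $x_1^2+x_2^2>0$. (Here $\rho(0,0)=\frac13|00\rangle\langle00|+\frac23|\psi^+\rangle\langle\psi^+|$ with $|\psi^+\rangle=\frac1{\sqrt2}(|01\rangle+|10\rangle)$, the two-qubit reduced state of the W state.)
   Context: On two qubits, let $\sigma_1,\sigma_2,\sigma_3$ denote the Pauli matrices on the first qubit and $\tau_1,\tau_2,\tau_3$ those on the second. For parameters $\gamma_1,\gamma_2$ set $u=\cos\gamma_1\cos\gamma_2$, $v=\sin\gamma_1\sin\gamma_2$, $z_1=\sin\gamma_1\cos\gamma_2$, $z_2=\cos\gamma_1\sin\gamma_2$, and define $\Sigma_0=\frac12(I+u\sigma_3+v\tau_3+z_1\sigma_1\tau_1+z_2\sigma_2\tau_2)$, $\Sigma_1=\frac12(\sin\gamma_1\sigma_1+\cos\gamma_2\tau_1+\sin\gamma_2\sigma_1\tau_3+\cos\gamma_1\sigma_3\tau_1)$, $\Sigma_2=\frac12(\sin\gamma_2\sigma_2+\cos\gamma_1\tau_2+\sin\gamma_1\sigma_2\tau_3+\cos\gamma_2\sigma_3\tau_2)$, $\Sigma_3=\frac12(v\sigma_3+u\tau_3-z_2\sigma_1\tau_1-z_1\sigma_2\tau_2+\sigma_3\tau_3)$.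 For a two-qubit density matrix $\rho$, $g(\rho):=\max\operatorname{tr}[\rho(\rho_1\otimes\rho_2)]$ over all pure single-qubit states $\rho_1,\rho_2$. *)

theory Defs
  imports "HOL-Analysis.Analysis"
begin

text \<open>Single-qubit operators are functions nat => nat => complex on the index set {0,1}
  (computational basis |0>, |1>); two-qubit operators are indexed by pairs (i,k) meaning |i k>,
  first component = first qubit. Entries outside the index range are 0.\<close>

type_synonym qmat = "nat \<Rightarrow> nat \<Rightarrow> complex"
type_synonym qqmat = "nat \<times> nat \<Rightarrow> nat \<times> nat \<Rightarrow> complex"

definition idx1 :: "nat set" where "idx1 = {0..<2}"
definition idx2 :: "(nat \<times> nat) set" where "idx2 = idx1 \<times> idx1"

definition id1 :: qmat where
  "id1 = (\<lambda>i j. if i < 2 \<and> j < 2 \<and> i = j then 1 else 0)"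

definition pauli :: "nat \<Rightarrow> qmat" where
  "pauli k = (\<lambda>i j. if i < 2 \<and> j < 2 then
      (if k = 1 then (if i \<noteq> j then 1 else 0)
       else if k = 2 then (if i = 0 \<and> j = 1 then - \<i> else if i = 1 \<and> j = 0 then \<i> else 0)
       else if k = 3 then (if i = j then (if i = 0 then 1 else -1) else 0)
       else 0)
    else 0)"

definition tensor :: "qmat \<Rightarrow> qmat \<Rightarrow> qqmat" where
  "tensor A B = (\<lambda>(i, k) (j, l). A i j * B k l)"

definition Id2 :: qqmat where "Id2 = tensor id1 id1"
definition sig :: "nat \<Rightarrow> qqmat" where "sig k = tensor (pauli k) id1"
definition tau :: "nat \<Rightarrow> qqmat" where "tau k = tensor id1 (pauli k)"
definition sigtau :: "nat \<Rightarrow> nat \<Rightarrow> qqmat" where "sigtau k l = tensor (pauli k) (pauli l)"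

definition mmult2 :: "qqmat \<Rightarrow> qqmat \<Rightarrow> qqmat" where
  "mmult2 M N = (\<lambda>p q. \<Sum>r\<in>idx2. M p r * N r q)"

definition trace2 :: "qqmat \<Rightarrow> complex" where
  "trace2 M = (\<Sum>p\<in>idx2. M p p)"

definition Sigma0 :: "real \<Rightarrow> real \<Rightarrow> qqmat" where
  "Sigma0 g1 g2 = (\<lambda>p q. (1/2) * (Id2 p q
     + complex_of_real (cos g1 * cos g2) * sig 3 p q
     + complex_of_real (sin g1 * sin g2) * tau 3 p q
     + complex_of_real (sin g1 * cos g2) * sigtau 1 1 p q
     + complex_of_real (cos g1 * sin g2) * sigtau 2 2 p q))"

definition Sigma1 :: "real \<Rightarrow> real \<Rightarrow> qqmat" where
  "Sigma1 g1 g2 = (\<lambda>p q. (1/2) * (complex_of_real (sin g1) * sig 1 p q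
     + complex_of_real (cos g2) * tau 1 p q
     + complex_of_real (sin g2) * sigtau 1 3 p q
     + complex_of_real (cos g1) * sigtau 3 1 p q))"

definition Sigma2 :: "real \<Rightarrow> real \<Rightarrow> qqmat" where
  "Sigma2 g1 g2 = (\<lambda>p q. (1/2) * (complex_of_real (sin g2) * sig 2 p q
     + complex_of_real (cos g1) * tau 2 p q
     + complex_of_real (sin g1) * sigtau 2 3 p q
     + complex_of_real (cos g2) * sigtau 3 2 p q))"

definition Sigma3 :: "real \<Rightarrow> real \<Rightarrow> qqmat" where
  "Sigma3 g1 g2 = (\<lambda>p q. (1/2) * (complex_of_real (sin g1 * sin g2) * sig 3 p q
     + complex_of_real (cos g1 * cos g2) * tau 3 p q
     - complex_of_real (cos g1 * sin g2) * sigtau 1 1 p q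
     - complex_of_real (sin g1 * cos g2) * sigtau 2 2 p q
     + sigtau 3 3 p q))"

definition unit_vec1 :: "(nat \<Rightarrow> complex) \<Rightarrow> bool" where
  "unit_vec1 \<psi> \<longleftrightarrow> (\<Sum>i\<in>idx1. (cmod (\<psi> i))\<^sup>2) = 1"

definition proj1 :: "(nat \<Rightarrow> complex) \<Rightarrow> qmat" where
  "proj1 \<psi> = (\<lambda>i j. if i < 2 \<and> j < 2 then \<psi> i * cnj (\<psi> j) else 0)"

definition pure_state1 :: "qmat \<Rightarrow> bool" where
  "pure_state1 R \<longleftrightarrow> (\<exists>\<psi>. unit_vec1 \<psi> \<and> R = proj1 \<psi>)"

text \<open>g(rho) = max tr[rho (rho1 (x) rho2)] over pure rho1, rho2 (the trace is real for
  Hermitian rho; we take its real part; the supremum is attained, so Sup = max).\<close>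
definition gmax :: "qqmat \<Rightarrow> real" where
  "gmax \<rho> = Sup {Re (trace2 (mmult2 \<rho> (tensor R1 R2))) | R1 R2. pure_state1 R1 \<and> pure_state1 R2}"

definition rhoW :: "real \<Rightarrow> real \<Rightarrow> qqmat" where
  "rhoW x1 x2 = (\<lambda>p q. (1/2) * (Sigma0 (pi/4) (pi/4) p q
     + complex_of_real x1 * Sigma1 (pi/4) (pi/4) p q
     + complex_of_real x2 * Sigma2 (pi/4) (pi/4) p q
     - (1/3) * Sigma3 (pi/4) (pi/4) p q))"

definition ket2 :: "nat \<Rightarrow> nat \<Rightarrow> nat \<times> nat \<Rightarrow> complex" where
  "ket2 i j = (\<lambda>p. if p = (i, j) then 1 else 0)"

definition outer2 :: "(nat \<times> nat \<Rightarrow> complex) \<Rightarrow> (nat \<times> nat \<Rightarrow> complex) \<Rightarrow> qqmat" where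
  "outer2 a b = (\<lambda>p q. if p \<in> idx2 \<and> q \<in> idx2 then a p * cnj (b q) else 0)"

definition psi_plus :: "nat \<times> nat \<Rightarrow> complex" where
  "psi_plus = (\<lambda>p. complex_of_real (1 / sqrt 2) * (ket2 0 1 p + ket2 1 0 p))"

end

theory Submission
  imports Defs
begin

(* In the basis |00>,|01>,|10>,|11> the state rho(x1,x2) has the block
   [[1/3, s, s, 0], [s', 1/3, 1/3, 0], [s', 1/3, 1/3, 0], [0,0,0,0]] (s' = conj s) with the coherence
   s = (x1 - i x2) sqrt 2 / 4.  For product vectors a (x) b, writing A = a0 b0 and
   X = a0 b1 + a1 b0, the overlap <a b| rho |a b> therefore equals
       |A|^2/3 + |X|^2/3 + 2 Re (s X conj A).
   For s = 0 the polynomial identity 4 - 3(p0^2 q0^2 + (p0 q1 + p1 q0)^2)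
   = (p0 q0 - 2 p1 q1)^2 + (p0 q1 - p1 q0)^2 (on unit vectors) bounds the overlap by 4/9,
   and the trial vector a = b = (sqrt(2/3), sqrt(1/3)) attains it, so g(rho(0,0)) = 4/9.
   For s <> 0 the same trial vector with the phase of its second component chosen as
   conj s / |s| keeps the first two terms at 4/9 and makes the cross term strictly positive,
   so g(rho(x1,x2)) > 4/9.  The file first computes the matrix entries of rho, then the
   overlap formula, the bounds, the trial vectors, and finally assembles the theorem. *)

lemma idx2_eq: "idx2 = {(0,0),(0,1),(1,0),(1,1)}"
  unfolding idx2_def idx1_def by auto

definition coherence :: "real \<Rightarrow> real \<Rightarrow> complex" where
  "coherence x1 x2 = (complex_of_real x1 - \<i> * complex_of_real x2) * complex_of_real (sqrt 2 / 4)"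

lemma coherence_zero: "coherence 0 0 = 0"
  unfolding coherence_def by simp

lemma coherence_nonzero:
  assumes "x1\<^sup>2 + x2\<^sup>2 > 0"
  shows "coherence x1 x2 \<noteq> 0"
proof
  assume "coherence x1 x2 = 0"
  then have "Re (coherence x1 x2) = 0" "Im (coherence x1 x2) = 0" by simp_all
  then have "x1 = 0" "x2 = 0" unfolding coherence_def by auto
  with assms show False by simp
qed

lemma rhoW_entries:
  shows "rhoW x1 x2 (0,0) (0,0) = 1/3" "rhoW x1 x2 (0,1) (0,1) = 1/3"
    "rhoW x1 x2 (1,0) (1,0) = 1/3" "rhoW x1 x2 (0,1) (1,0) = 1/3" "rhoW x1 x2 (1,0) (0,1) = 1/3"
    "rhoW x1 x2 (0,0) (0,1) = coherence x1 x2" "rhoW x1 x2 (0,0) (1,0) = coherence x1 x2"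
    "rhoW x1 x2 (0,1) (0,0) = cnj (coherence x1 x2)"
    "rhoW x1 x2 (1,0) (0,0) = cnj (coherence x1 x2)"
    "rhoW x1 x2 (1,1) (j,l) = 0" "rhoW x1 x2 (j,l) (1,1) = 0"
  unfolding coherence_def rhoW_def Sigma0_def Sigma1_def Sigma2_def Sigma3_def sig_def tau_def
    sigtau_def Id2_def tensor_def pauli_def id1_def sin_45 cos_45
  by (simp_all add: field_simps)

lemma rhoW_outside:
  assumes "\<not> (i < 2 \<and> k < 2 \<and> j < 2 \<and> l < 2)"
  shows "rhoW x1 x2 (i,k) (j,l) = 0"
proof -
  have pauli_out: "pauli n u v = 0" and id1_out: "id1 u v = 0" if "\<not> (u < 2 \<and> v < 2)" for n u v
    using that unfolding pauli_def id1_def by auto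
  have "tensor (pauli n) (pauli m) (i,k) (j,l) = 0" "tensor (pauli n) id1 (i,k) (j,l) = 0"
    "tensor id1 (pauli n) (i,k) (j,l) = 0" "tensor id1 id1 (i,k) (j,l) = 0" for n m
    using assms by (auto simp: tensor_def pauli_out id1_out)
  then show ?thesis
    unfolding rhoW_def Sigma0_def Sigma1_def Sigma2_def Sigma3_def sig_def tau_def sigtau_def Id2_def
    by simp
qed

lemma rhoW_origin_W_marginal:
  "rhoW 0 0 = (\<lambda>p q. (1/3) * outer2 (ket2 0 0) (ket2 0 0) p q + (2/3) * outer2 psi_plus psi_plus p q)"
proof (intro ext)
  fix p q :: "nat \<times> nat"
  obtain i k j l where pq: "p = (i,k)" "q = (j,l)" by (cases p, cases q) auto
  have half: "complex_of_real (1 / sqrt 2) * complex_of_real (1 / sqrt 2) = 1/2"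
    by (simp flip: of_real_mult)
  have two: "complex_of_real (sqrt 2) * complex_of_real (sqrt 2) = 2"
    by (simp flip: of_real_mult)
  show "rhoW 0 0 p q = (1/3) * outer2 (ket2 0 0) (ket2 0 0) p q + (2/3) * outer2 psi_plus psi_plus p q"
  proof (cases "i < 2 \<and> k < 2 \<and> j < 2 \<and> l < 2")
    case True
    then have "i \<in> {0,1}" "k \<in> {0,1}" "j \<in> {0,1}" "l \<in> {0,1}" by auto
    then show ?thesis
      by (auto simp: pq outer2_def ket2_def psi_plus_def idx2_eq half two mult.assoc[symmetric]
          coherence_zero rhoW_entries[of 0 0] rhoW_entries[of 0 0, unfolded One_nat_def])
  next
    case False
    then show ?thesis
      using rhoW_outside[OF False, of 0 0] by (auto simp: pq outer2_def idx2_def idx1_def)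
  qed
qed

definition overlap :: "real \<Rightarrow> real \<Rightarrow> (nat \<Rightarrow> complex) \<Rightarrow> (nat \<Rightarrow> complex) \<Rightarrow> real" where
  "overlap x1 x2 a b = Re (trace2 (mmult2 (rhoW x1 x2) (tensor (proj1 a) (proj1 b))))"

lemma gmax_rhoW:
  "gmax (rhoW x1 x2) = Sup {overlap x1 x2 a b | a b. unit_vec1 a \<and> unit_vec1 b}"
  unfolding gmax_def overlap_def pure_state1_def by metis

lemma hermitian_form_Re:
  fixes A X s :: complex
  shows "Re ((1/3)*(A*cnj A) + (1/3)*(X*cnj X) + s*X*cnj A + cnj s*cnj X*A)
     = (1/3)*(cmod A)^2 + (1/3)*(cmod X)^2 + 2*Re (s*X*cnj A)"
proof -
  have "A*cnj A = of_real ((cmod A)^2)" "X*cnj X = of_real ((cmod X)^2)"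
    by (simp_all add: complex_norm_square[symmetric] del: of_real_power)
  moreover have "cnj s*cnj X*A = cnj (s*X*cnj A)" by simp
  ultimately show ?thesis by (simp add: algebra_simps)
qed

lemma overlap_formula:
  "overlap x1 x2 a b = (1/3) * (cmod (a 0 * b 0))^2 + (1/3) * (cmod (a 0 * b 1 + a 1 * b 0))^2
     + 2 * Re (coherence x1 x2 * (a 0 * b 1 + a 1 * b 0) * cnj (a 0 * b 0))"
proof -
  let ?A = "a 0 * b 0" and ?X = "a 0 * b 1 + a 1 * b 0" and ?s = "coherence x1 x2"
  have "trace2 (mmult2 (rhoW x1 x2) (tensor (proj1 a) (proj1 b)))
      = (1/3)*(?A*cnj ?A) + (1/3)*(?X*cnj ?X) + ?s*?X*cnj ?A + cnj ?s*cnj ?X*?A"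
    unfolding trace2_def mmult2_def idx2_eq
    by (simp add: rhoW_entries rhoW_entries[unfolded One_nat_def] tensor_def proj1_def algebra_simps)
  then show ?thesis
    unfolding overlap_def by (simp only: hermitian_form_Re)
qed

lemma unit_vec1_norms: "unit_vec1 a \<Longrightarrow> (cmod (a 0))^2 + (cmod (a 1))^2 = 1"
  unfolding unit_vec1_def idx1_def by (simp add: numeral_2_eq_2)

lemma unit_vec1_components_le1:
  assumes "unit_vec1 a"
  shows "cmod (a 0) \<le> 1" "cmod (a 1) \<le> 1"
proof -
  have "(cmod (a 0))^2 \<le> 1" "(cmod (a 1))^2 \<le> 1"
    using unit_vec1_norms[OF assms] zero_le_power2[of "cmod (a 0)"] zero_le_power2[of "cmod (a 1)"]
    by linarith+
  then show "cmod (a 0) \<le> 1" "cmod (a 1) \<le> 1" by (simp_all add: abs_square_le_1)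
qed

lemma product_amplitudes_bound:
  fixes p0 p1 q0 q1 :: real
  assumes "p0\<^sup>2 + p1\<^sup>2 = 1" "q0\<^sup>2 + q1\<^sup>2 = 1"
  shows "(p0*q0)^2 + (p0*q1 + p1*q0)^2 \<le> 4/3"
proof -
  have "4*((p0\<^sup>2 + p1\<^sup>2)*(q0\<^sup>2 + q1\<^sup>2)) - 3*((p0*q0)^2 + (p0*q1 + p1*q0)^2)
      = (p0*q0 - 2*p1*q1)^2 + (p0*q1 - p1*q0)^2"
    by (simp add: power2_eq_square algebra_simps)
  also have "\<dots> \<ge> 0" by simp
  finally show ?thesis using assms by simp
qed

lemma overlap_origin_le:
  assumes "unit_vec1 a" "unit_vec1 b"
  shows "overlap 0 0 a b \<le> 4/9"
proof -
  let ?X = "a 0 * b 1 + a 1 * b 0" and ?Y = "cmod (a 0) * cmod (b 1) + cmod (a 1) * cmod (b 0)"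
  have "cmod ?X \<le> ?Y" by (metis norm_mult norm_triangle_ineq)
  then have "(cmod ?X)^2 \<le> ?Y^2" by (simp add: power_mono)
  moreover have "(cmod (a 0) * cmod (b 0))^2 + ?Y^2 \<le> 4/3"
    by (rule product_amplitudes_bound[OF unit_vec1_norms[OF assms(1)] unit_vec1_norms[OF assms(2)]])
  moreover have "overlap 0 0 a b = (1/3) * (cmod (a 0) * cmod (b 0))^2 + (1/3) * (cmod ?X)^2"
    unfolding overlap_formula coherence_zero norm_mult[of "a 0" "b 0"] by simp
  ultimately show ?thesis by linarith
qed

text \<open>Away from the origin the overlap changes by at most 4|s|; this gives boundedness.\<close>
lemma overlap_le:
  assumes "unit_vec1 a" "unit_vec1 b"
  shows "overlap x1 x2 a b \<le> 4/9 + 4 * cmod (coherence x1 x2)"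
proof -
  let ?A = "a 0 * b 0" and ?X = "a 0 * b 1 + a 1 * b 0" and ?s = "coherence x1 x2"
  note le1 = unit_vec1_components_le1[OF assms(1)] unit_vec1_components_le1[OF assms(2)]
  have "cmod (a 0) * cmod (b 1) \<le> 1" "cmod (a 1) * cmod (b 0) \<le> 1"
    using le1 by (simp_all add: mult_le_one)
  moreover have "cmod ?X \<le> cmod (a 0) * cmod (b 1) + cmod (a 1) * cmod (b 0)"
    by (metis norm_mult norm_triangle_ineq)
  ultimately have X_le: "cmod ?X \<le> 2" by linarith
  have A_le: "cmod ?A \<le> 1" using le1 by (simp add: mult_le_one norm_mult)
  have "Re (?s * ?X * cnj ?A) \<le> cmod (?s * ?X * cnj ?A)" by (rule complex_Re_le_cmod)
  also have "\<dots> = cmod ?s * cmod ?X * cmod ?A" by (simp add: norm_mult)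
  also have "\<dots> \<le> cmod ?s * 2 * 1" using X_le A_le by (intro mult_mono) auto
  finally have "2 * Re (?s * ?X * cnj ?A) \<le> 4 * cmod ?s" by simp
  moreover have "overlap 0 0 a b \<le> 4/9" by (rule overlap_origin_le[OF assms])
  ultimately show ?thesis unfolding overlap_formula coherence_zero by simp
qed

definition trial :: "real \<Rightarrow> real \<Rightarrow> complex \<Rightarrow> nat \<Rightarrow> complex" where
  "trial c0 c1 z = (\<lambda>i. if i = 0 then complex_of_real c0 else if i = 1 then complex_of_real c1 * z else 0)"

lemma trial_unit: "c0\<^sup>2 + c1\<^sup>2 = 1 \<Longrightarrow> cmod z = 1 \<Longrightarrow> unit_vec1 (trial c0 c1 z)"
  unfolding unit_vec1_def idx1_def trial_def by (simp add: numeral_2_eq_2 norm_mult)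

lemma overlap_trial:
  assumes "cmod z = 1"
  shows "overlap x1 x2 (trial c0 c1 z) (trial c0 c1 z)
    = (1/3)*c0^4 + (4/3)*c0^2*c1^2 + 4*c0^3*c1 * Re (coherence x1 x2 * z)"
proof -
  let ?v = "trial c0 c1 z"
  have X: "?v 0 * ?v 1 + ?v 1 * ?v 0 = complex_of_real (2*c0*c1) * z"
    unfolding trial_def by simp
  have A: "?v 0 * ?v 0 = complex_of_real (c0^2)"
    unfolding trial_def by (simp add: power2_eq_square)
  have cross: "coherence x1 x2 * (complex_of_real (2*c0*c1) * z) * cnj (complex_of_real (c0^2))
     = complex_of_real (2*c0^3*c1) * (coherence x1 x2 * z)"
    by (simp add: algebra_simps power2_eq_square power3_eq_cube)
  show ?thesis unfolding overlap_formula X A cross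
    by (simp add: norm_mult assms power_mult_distrib algebra_simps power4_eq_xxxx power2_eq_square)
qed

abbreviation W_trial :: "complex \<Rightarrow> nat \<Rightarrow> complex" where
  "W_trial z \<equiv> trial (sqrt (2/3)) (sqrt (1/3)) z"

lemma W_trial_unit: "cmod z = 1 \<Longrightarrow> unit_vec1 (W_trial z)"
  by (rule trial_unit) simp_all

lemma overlap_W_trial:
  assumes "cmod z = 1"
  shows "overlap x1 x2 (W_trial z) (W_trial z)
    = 4/9 + 4 * sqrt (2/3)^3 * sqrt (1/3) * Re (coherence x1 x2 * z)"
proof -
  have fourth: "c^4 = (c^2)^2" for c :: real
    by (simp add: power4_eq_xxxx power2_eq_square)
  have sq: "sqrt (2/3)^2 = (2/3::real)" "sqrt (1/3)^2 = (1/3::real)" by simp_all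
  have "(1/3) * sqrt (2/3)^4 + (4/3) * sqrt (2/3)^2 * sqrt (1/3)^2 = (4/9::real)"
    unfolding fourth sq by (simp add: power2_eq_square)
  then show ?thesis unfolding overlap_trial[OF assms] by linarith
qed

lemma gmax_origin: "gmax (rhoW 0 0) = 4/9"
  unfolding gmax_rhoW
proof (rule cSup_eq_maximum)
  have "Re (coherence 0 0 * 1) = 0" by (simp add: coherence_zero)
  then have "overlap 0 0 (W_trial 1) (W_trial 1) = 4/9"
    unfolding overlap_W_trial[OF norm_one] by (simp only: mult_zero_right add_0_right)
  moreover have "unit_vec1 (W_trial 1)" by (rule W_trial_unit[OF norm_one])
  ultimately show "4/9 \<in> {overlap 0 0 a b | a b. unit_vec1 a \<and> unit_vec1 b}"
    by (metis (mono_tags, lifting) mem_Collect_eq)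
qed (use overlap_origin_le in blast)

text \<open>Aligning the phase z with the coherence makes the cross term strictly positive.\<close>
lemma gmax_off_origin:
  assumes "x1\<^sup>2 + x2\<^sup>2 > 0"
  shows "gmax (rhoW x1 x2) > 4/9"
proof -
  let ?O = "{overlap x1 x2 a b | a b. unit_vec1 a \<and> unit_vec1 b}"
  define s where "s = coherence x1 x2"
  have s_nz: "s \<noteq> 0" unfolding s_def by (rule coherence_nonzero[OF assms])
  define z where "z = cnj s / complex_of_real (cmod s)"
  have z_unit: "cmod z = 1" using s_nz unfolding z_def by (simp add: norm_divide)
  have "s * z = complex_of_real (cmod s)"
    using s_nz unfolding z_def
    by (simp add: complex_norm_square[symmetric] power2_eq_square field_simps del: of_real_power)
  then have Re_sz: "Re (s * z) = cmod s" by simp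
  have "0 < 4 * sqrt (2/3) ^ 3 * sqrt (1/3::real)" "0 < cmod s"
    using s_nz by simp_all
  then have gain: "4 * sqrt (2/3)^3 * sqrt (1/3) * cmod s > 0" by (rule mult_pos_pos)
  have "overlap x1 x2 (W_trial z) (W_trial z) \<in> ?O"
    using W_trial_unit[OF z_unit] by blast
  moreover have "bdd_above ?O"
    unfolding bdd_above_def using overlap_le by blast
  ultimately have "overlap x1 x2 (W_trial z) (W_trial z) \<le> Sup ?O" by (rule cSup_upper)
  then show ?thesis
    unfolding gmax_rhoW overlap_W_trial[OF z_unit] s_def[symmetric] Re_sz using gain by linarith
qed

theorem mainTheorem6:
  shows "rhoW 0 0 = (\<lambda>p q. (1/3) * outer2 (ket2 0 0) (ket2 0 0) p q
                          + (2/3) * outer2 psi_plus psi_plus p q)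
    \<and> gmax (rhoW 0 0) = 4/9
    \<and> (\<forall>x1 x2 :: real. x1\<^sup>2 + x2\<^sup>2 + 1/9 \<le> 1 \<and> x1\<^sup>2 + x2\<^sup>2 > 0
          \<longrightarrow> gmax (rhoW x1 x2) > gmax (rhoW 0 0))"
proof (intro conjI allI impI)
  fix x1 x2 :: real
  assume "x1\<^sup>2 + x2\<^sup>2 + 1/9 \<le> 1 \<and> x1\<^sup>2 + x2\<^sup>2 > 0"
  then show "gmax (rhoW x1 x2) > gmax (rhoW 0 0)"
    unfolding gmax_origin using gmax_off_origin by blast
qed (rule rhoW_origin_W_marginal, rule gmax_origin)

end
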